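(* Let $\mathbb{K}$ be a field of characteristic $0$, $\mathcal{S}=\mathbb{K}[x_0,\dots,x_n]$, and let $f\in\mathcal{S}_d$ have a Generalized Additive Decomposition $f=\sum_{i=1}^s\omega_i\ell_i^{d-k_i}$ with each $\ell_i=x_0+\xi_{i,1}x_1+\dots+\xi_{i,n}x_n$. Let $\underline\varphi:=\sum_{i=1}^s\omega_i^{d,\ell_i,\mathbf x}(\underline{\mathbf z})e_{\ell_i}(\underline{\mathbf z})$ and let $I_{\underline\varphi}$ be the homogeneous ideal spanned by all homogeneous $p\in\mathcal{S}$ with $p\star\underline\varphi=0$. Then $I_{\underline\varphi}$ is apolar to $f$, i.e. $f^*(p)=0$ for every $p\in(I_{\underline\varphi})_d$.
   Context: $\mathcal{S}^*$ is identified with $\mathbb{K}[[z_0,\dots,z_n]]$ via $\sum_\alpha\varphi_\alpha\underline{\mathbf z}^\alpha/\alpha!\leftrightarrow(\underline{\mathbf x}^\alpha\mapsto\varphi_\alpha)$; $p\star\varphi$ is $q\mapsto\varphi(pq)$; $e_\ell(\underline{\mathbf z})=\exp(\sum_i\underline\xi_iz_i)$ for $\ell=\sum\underline\xi_ix_i$; $f^*:=\frac1{d!}f(z_0,\dots,z_n)\in\mathcal{S}_d^*$. A GAD of $f$ is $f=\sum_i\omega_i\ell_i^{d-k_i}$ with $0\le k_i\le d$, $\omega_i\in\mathcal{S}_{k_i}$, $\ell_i\in\mathcal{S}_1$ pairwise non-proportional, $\ell_i\nmid\omega_i$. For $\mathbf x=(x_1,\dots,x_n)$, writing $\omega_i=\sum_{j}\omega_{i,j}\ell_i^{k_i-j}$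 with $\omega_{i,j}\in\mathbb{K}[x_1,\dots,x_n]_j$, $\omega_i^{d,\ell_i,\mathbf x}:=\frac1{d!}\sum_j(d-j)!\,\omega_{i,j}$, read in the variables $\underline{\mathbf z}$. *)

theory Defs
  imports "HOL-Library.Poly_Mapping"
begin

(* Multivariate polynomials: monomials (exponent vectors) are finitely supported maps
  nat \<Rightarrow>\<^sub>0 nat (variable x_i has index i); polynomials are finitely supported maps
  from monomials to coefficients. *)

type_synonym mon = "nat \<Rightarrow>\<^sub>0 nat"
type_synonym 'a mpoly = "mon \<Rightarrow>\<^sub>0 'a"

definition mdeg :: "mon \<Rightarrow> nat" where
  "mdeg \<alpha> = (\<Sum>i\<in>Poly_Mapping.keys \<alpha>. Poly_Mapping.lookup \<alpha> i)"

definition mfact :: "mon \<Rightarrow> nat" where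
  "mfact \<alpha> = (\<Prod>i\<in>Poly_Mapping.keys \<alpha>. fact (Poly_Mapping.lookup \<alpha> i))"

definition mon_in_vars :: "nat set \<Rightarrow> mon \<Rightarrow> bool" where
  "mon_in_vars V \<alpha> \<longleftrightarrow> Poly_Mapping.keys \<alpha> \<subseteq> V"

definition poly_in_vars :: "nat set \<Rightarrow> 'a::zero mpoly \<Rightarrow> bool" where
  "poly_in_vars V p \<longleftrightarrow> (\<forall>\<alpha>\<in>Poly_Mapping.keys p. mon_in_vars V \<alpha>)"

definition homog :: "nat \<Rightarrow> 'a::zero mpoly \<Rightarrow> bool" where
  "homog d p \<longleftrightarrow> (\<forall>\<alpha>\<in>Poly_Mapping.keys p. mdeg \<alpha> = d)"

definition inS :: "nat \<Rightarrow> 'a::zero mpoly \<Rightarrow> bool" where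
  "inS n p \<longleftrightarrow> poly_in_vars {..n} p"

definition inSd :: "nat \<Rightarrow> nat \<Rightarrow> 'a::zero mpoly \<Rightarrow> bool" where
  "inSd n d p \<longleftrightarrow> inS n p \<and> homog d p"

definition Var :: "nat \<Rightarrow> 'a::{zero,one} mpoly" where
  "Var i = Poly_Mapping.single (Poly_Mapping.single i 1) 1"

definition Const :: "'a::zero \<Rightarrow> 'a mpoly" where
  "Const c = Poly_Mapping.single 0 c"

(* Elements of the dual S^*: identified with formal power series in z_0,...,z_n.
  We store a power series by its ordinary coefficients (mon \<Rightarrow> 'a, coefficient of z^\<alpha>);
  the series \<Sum> \<phi>_\<alpha> z^\<alpha>/\<alpha>! corresponds to the functional x^\<alpha> \<mapsto> \<phi>_\<alpha>, i.e.
  the functional takes the value \<alpha>! * (coefficient of z^\<alpha>) on x^\<alpha>. *)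

type_synonym 'a series = "mon \<Rightarrow> 'a"

definition mon_le :: "mon \<Rightarrow> mon \<Rightarrow> bool" where
  "mon_le \<beta> \<alpha> \<longleftrightarrow> (\<forall>i. Poly_Mapping.lookup \<beta> i \<le> Poly_Mapping.lookup \<alpha> i)"

definition ser_mult :: "'a::comm_semiring_1 series \<Rightarrow> 'a series \<Rightarrow> 'a series" where
  "ser_mult s t \<alpha> = (\<Sum>\<beta>\<in>{\<beta>. mon_le \<beta> \<alpha>}. s \<beta> * t (\<alpha> - \<beta>))"

definition dual_val :: "'a::comm_semiring_1 series \<Rightarrow> mon \<Rightarrow> 'a" where
  "dual_val s \<alpha> = of_nat (mfact \<alpha>) * s \<alpha>"

definition apply_dual :: "'a::comm_semiring_1 series \<Rightarrow> 'a mpoly \<Rightarrow> 'a" where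
  "apply_dual s p = (\<Sum>\<alpha>\<in>Poly_Mapping.keys p. Poly_Mapping.lookup p \<alpha> * dual_val s \<alpha>)"

(* p \<star> \<phi> is the functional q \<mapsto> \<phi>(p q); it is zero in S^* iff it vanishes on all q in S. *)
definition star_zero :: "nat \<Rightarrow> 'a::comm_semiring_1 mpoly \<Rightarrow> 'a series \<Rightarrow> bool" where
  "star_zero n p s \<longleftrightarrow> (\<forall>q. inS n q \<longrightarrow> apply_dual s (p * q) = 0)"

definition poly_ser :: "'a::zero mpoly \<Rightarrow> 'a series" where
  "poly_ser p = Poly_Mapping.lookup p"

(* e_L(z) = exp(\<Sum>_i \<xi>_i z_i) for L = \<Sum>_i \<xi>_i x_i: coefficient of z^\<alpha> is \<xi>^\<alpha>/\<alpha>!. *)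
definition exp_lin :: "'a::field_char_0 mpoly \<Rightarrow> 'a series" where
  "exp_lin L \<alpha> =
     (\<Prod>i\<in>Poly_Mapping.keys \<alpha>. Poly_Mapping.lookup L (Poly_Mapping.single i 1) ^ Poly_Mapping.lookup \<alpha> i) / of_nat (mfact \<alpha>)"

(* f^* = (1/d!) f(z_0,...,z_n) as an element of S^*_d. *)
definition fstar :: "nat \<Rightarrow> 'a::field_char_0 mpoly \<Rightarrow> 'a series" where
  "fstar d f \<alpha> = Poly_Mapping.lookup f \<alpha> / of_nat (fact d)"

inductive_set ideal_gen :: "nat \<Rightarrow> 'a::comm_ring_1 mpoly set \<Rightarrow> 'a mpoly set"
  for n G where
  zero: "0 \<in> ideal_gen n G"
| gen: "g \<in> G \<Longrightarrow> inS n q \<Longrightarrow> q * g \<in> ideal_gen n G"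
| add: "a \<in> ideal_gen n G \<Longrightarrow> b \<in> ideal_gen n G \<Longrightarrow> a + b \<in> ideal_gen n G"

definition I_phi :: "nat \<Rightarrow> 'a::comm_ring_1 series \<Rightarrow> 'a mpoly set" where
  "I_phi n s = ideal_gen n {p. inS n p \<and> (\<exists>e. homog e p) \<and> star_zero n p s}"

end

theory Submission
  imports Defs
begin

text \<open>For a linear form \<open>\<ell>\<close>, the power \<open>\<ell>\<^sup>m\<close> is \<open>m!\<close> times the degree-\<open>m\<close> part of
  \<open>e\<^sub>\<ell>\<close>. Hence the degree-\<open>d\<close> part of \<open>\<omega>\<^sup>d\<^sup>,\<^sup>\<ell>\<^sup>,\<^sup>x e\<^sub>\<ell>\<close> is \<open>\<omega> \<ell>\<^sup>d\<^sup>-\<^sup>k / d!\<close>, and summing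
  over the decomposition, the degree-\<open>d\<close> part of \<open>\<phi>\<close> is exactly \<open>f\<^sup>*\<close>. On the other
  hand the degree-\<open>d\<close> part of \<open>\<phi>\<close> kills all of \<open>I\<^sub>\<phi>\<close>: on a product \<open>q g\<close> with \<open>g\<close> a
  homogeneous generator of degree \<open>e\<close> it only sees \<open>q' g\<close>, where \<open>q'\<close> is the degree-\<open>(d - e)\<close>
  component of \<open>q\<close>, and \<open>\<phi>(q' g) = 0\<close> because \<open>g \<star> \<phi> = 0\<close>.\<close>

lemma mon_add_eq_iff: "a = l + q \<longleftrightarrow> mon_le l a \<and> q = a - l"
  unfolding mon_le_def
  by (auto simp: poly_mapping_eq_iff fun_eq_iff lookup_add lookup_minus)

lemma mon_le_add_diff: "mon_le l a \<Longrightarrow> l + (a - l) = a"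
  using mon_add_eq_iff by metis

lemma mon_le_single_iff: "mon_le (Poly_Mapping.single i 1) a \<longleftrightarrow> i \<in> Poly_Mapping.keys a"
  unfolding mon_le_def by (auto simp: lookup_single when_def in_keys_iff)

lemma mdeg_eq_sum_superset:
  "finite K \<Longrightarrow> Poly_Mapping.keys a \<subseteq> K \<Longrightarrow> mdeg a = (\<Sum>i\<in>K. Poly_Mapping.lookup a i)"
  unfolding mdeg_def by (rule sum.mono_neutral_left) (auto simp: in_keys_iff)

lemma mfact_eq_prod_superset:
  "finite K \<Longrightarrow> Poly_Mapping.keys a \<subseteq> K \<Longrightarrow> mfact a = (\<Prod>i\<in>K. fact (Poly_Mapping.lookup a i))"
  unfolding mfact_def by (rule prod.mono_neutral_left) (auto simp: in_keys_iff)

lemma mdeg_add: "mdeg (a + b) = mdeg a + mdeg b"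
proof -
  let ?K = "Poly_Mapping.keys a \<union> Poly_Mapping.keys b"
  have "mdeg (a + b) = (\<Sum>i\<in>?K. Poly_Mapping.lookup (a + b) i)"
    using keys_add[of a b] by (intro mdeg_eq_sum_superset) auto
  also have "\<dots> = mdeg a + mdeg b"
    by (simp add: lookup_add sum.distrib mdeg_eq_sum_superset[of ?K a] mdeg_eq_sum_superset[of ?K b])
  finally show ?thesis .
qed

lemma mdeg_mono: "mon_le l a \<Longrightarrow> mdeg l \<le> mdeg a"
  by (metis mon_le_add_diff mdeg_add le_add1)

lemma mdeg_diff: "mon_le l a \<Longrightarrow> mdeg (a - l) = mdeg a - mdeg l"
  by (metis mon_le_add_diff mdeg_add diff_add_inverse)

lemma mdeg_eq_0_iff: "mdeg a = 0 \<longleftrightarrow> a = 0"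
  unfolding mdeg_def by (auto simp: poly_mapping_eq_iff fun_eq_iff in_keys_iff)

lemma mdeg_single: "mdeg (Poly_Mapping.single i 1) = 1"
  unfolding mdeg_def by simp

lemma lookup_le_mdeg: "Poly_Mapping.lookup a i \<le> mdeg a"
proof (cases "i \<in> Poly_Mapping.keys a")
  case True
  then show ?thesis unfolding mdeg_def by (intro member_le_sum) auto
qed (simp add: in_keys_iff)

lemma finite_mon_le: "finite {b. mon_le b a}"
proof -
  let ?F = "{h. \<forall>i. (i \<in> Poly_Mapping.keys a \<longrightarrow> h i \<in> {0..mdeg a}) \<and>
                     (i \<notin> Poly_Mapping.keys a \<longrightarrow> h i = 0)}"
  have lookup_in: "Poly_Mapping.lookup b \<in> ?F" if "mon_le b a" for b
  proof -
    have le: "Poly_Mapping.lookup b i \<le> Poly_Mapping.lookup a i" for i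
      using that unfolding mon_le_def by blast
    have "Poly_Mapping.lookup b i = 0" if "i \<notin> Poly_Mapping.keys a" for i
      using le[of i] that by (simp add: in_keys_iff)
    then show ?thesis
      using le_trans[OF le lookup_le_mdeg] by auto
  qed
  have "Poly_Mapping.lookup ` {b. mon_le b a} \<subseteq> ?F"
    by (rule image_subsetI) (rule lookup_in, simp)
  then have "finite (Poly_Mapping.lookup ` {b. mon_le b a})"
    by (rule finite_subset) (intro finite_set_of_finite_funs; simp)
  moreover have "inj_on Poly_Mapping.lookup {b. mon_le b a}"
    by (auto intro: inj_onI poly_mapping_eqI)
  ultimately show ?thesis by (rule finite_imageD)
qed

lemma lookup_mult_eq_sum_superset:
  fixes f g :: "'a::comm_semiring_1 mpoly"
  assumes "finite K" "Poly_Mapping.keys f \<subseteq> K"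
  shows "Poly_Mapping.lookup (f * g) a =
    (\<Sum>l\<in>K. if mon_le l a then Poly_Mapping.lookup f l * Poly_Mapping.lookup g (a - l) else 0)"
proof -
  have inner: "(\<Sum>q. Poly_Mapping.lookup g q when a = l + q) =
      (if mon_le l a then Poly_Mapping.lookup g (a - l) else 0)" for l
    by (simp add: mon_add_eq_iff when_def)
  have "Poly_Mapping.lookup (f * g) a =
      (\<Sum>l. Poly_Mapping.lookup f l * (if mon_le l a then Poly_Mapping.lookup g (a - l) else 0))"
    by (simp add: lookup_mult inner)
  also have "\<dots> =
      (\<Sum>l\<in>K. Poly_Mapping.lookup f l * (if mon_le l a then Poly_Mapping.lookup g (a - l) else 0))"
    using assms by (intro Sum_any.expand_superset)
      (auto simp: in_keys_iff subset_iff dest: mult_not_zero split: if_splits)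
  finally show ?thesis by (simp add: if_distrib cong: if_cong)
qed

lemmas lookup_mult_eq_sum_keys = lookup_mult_eq_sum_superset[OF finite_keys order_refl]

lemma lookup_Const_mult:
  "Poly_Mapping.lookup (Const c * p) a = (c::'a::comm_semiring_1) * Poly_Mapping.lookup p a"
proof -
  have "mon_le 0 a" by (simp add: mon_le_def)
  then show ?thesis
    by (simp add: lookup_mult_eq_sum_superset[of "{0}"] Const_def)
qed

definition linear_form :: "'a::zero mpoly \<Rightarrow> bool" where
  "linear_form L \<longleftrightarrow> (\<forall>\<mu>\<in>Poly_Mapping.keys L. \<exists>i. \<mu> = Poly_Mapping.single i 1)"

definition lin_coeff :: "'a::zero mpoly \<Rightarrow> nat \<Rightarrow> 'a" where
  "lin_coeff L i = Poly_Mapping.lookup L (Poly_Mapping.single i 1)"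

lemma linear_form_Var: "linear_form (Var i :: 'a::zero_neq_one mpoly)"
  unfolding linear_form_def Var_def by (auto simp del: One_nat_def)

lemma linear_form_add: "linear_form L \<Longrightarrow> linear_form M \<Longrightarrow> linear_form (L + M)"
  using keys_add[of L M] unfolding linear_form_def by blast

lemma linear_form_sum: "(\<And>i. i \<in> I \<Longrightarrow> linear_form (L i)) \<Longrightarrow> linear_form (\<Sum>i\<in>I. L i)"
  using keys_sum[of L I] unfolding linear_form_def by blast

lemma linear_form_Const_mult:
  "linear_form L \<Longrightarrow> linear_form (Const (c::'a::comm_semiring_1) * L)"
  unfolding linear_form_def by (auto simp: in_keys_iff lookup_Const_mult)

lemma lookup_linear_form_mult:
  fixes L Q :: "'a::comm_semiring_1 mpoly"
  assumes "linear_form L"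
  shows "Poly_Mapping.lookup (L * Q) a =
    (\<Sum>i\<in>Poly_Mapping.keys a. lin_coeff L i * Poly_Mapping.lookup Q (a - Poly_Mapping.single i 1))"
proof -
  let ?S = "(\<lambda>i. Poly_Mapping.single i 1) ` Poly_Mapping.keys a"
  let ?t = "\<lambda>l. if mon_le l a then Poly_Mapping.lookup L l * Poly_Mapping.lookup Q (a - l) else 0"
  have "Poly_Mapping.lookup (L * Q) a = (\<Sum>l\<in>Poly_Mapping.keys L \<union> ?S. ?t l)"
    by (rule lookup_mult_eq_sum_superset) auto
  also have "\<dots> = (\<Sum>l\<in>?S. ?t l)"
  proof (rule sum.mono_neutral_right)
    show "\<forall>l\<in>Poly_Mapping.keys L \<union> ?S - ?S. ?t l = 0"
    proof
      fix l assume l: "l \<in> Poly_Mapping.keys L \<union> ?S - ?S"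
      then obtain j where j: "l = Poly_Mapping.single j 1"
        using assms unfolding linear_form_def by blast
      with l have "j \<notin> Poly_Mapping.keys a"
        by blast
      then show "?t l = 0"
        by (simp add: j mon_le_single_iff del: One_nat_def)
    qed
  qed auto
  also have "\<dots> = (\<Sum>i\<in>Poly_Mapping.keys a. ?t (Poly_Mapping.single i 1))"
  proof -
    have "inj_on (\<lambda>i. Poly_Mapping.single i (1::nat)) (Poly_Mapping.keys a)"
      by (rule inj_onI) (metis lookup_single_eq lookup_single_not_eq one_neq_zero)
    then show ?thesis
      by (simp only: sum.reindex comp_def)
  qed
  also have "\<dots> =
      (\<Sum>i\<in>Poly_Mapping.keys a. lin_coeff L i * Poly_Mapping.lookup Q (a - Poly_Mapping.single i 1))"
    by (rule sum.cong) (simp_all add: mon_le_single_iff lin_coeff_def del: One_nat_def)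
  finally show ?thesis .
qed

lemma exp_lin_eq_prod_superset:
  fixes L :: "'a::field_char_0 mpoly"
  assumes "finite K" "Poly_Mapping.keys a \<subseteq> K"
  shows "exp_lin L a =
    (\<Prod>i\<in>K. lin_coeff L i ^ Poly_Mapping.lookup a i / fact (Poly_Mapping.lookup a i))"
proof -
  have "exp_lin L a = (\<Prod>i\<in>K. lin_coeff L i ^ Poly_Mapping.lookup a i) / of_nat (mfact a)"
    unfolding exp_lin_def lin_coeff_def using assms
    by (subst prod.mono_neutral_left[of K]) (auto simp: in_keys_iff)
  then show ?thesis
    using assms by (simp add: mfact_eq_prod_superset prod_dividef)
qed

text \<open>The coefficientwise form of the derivation rule \<open>\<partial>\<^sub>i e\<^sub>L = \<xi>\<^sub>i e\<^sub>L\<close>.\<close>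

lemma exp_lin_minus_single:
  fixes L :: "'a::field_char_0 mpoly"
  assumes i: "i \<in> Poly_Mapping.keys a"
  shows "lin_coeff L i * exp_lin L (a - Poly_Mapping.single i 1) =
    of_nat (Poly_Mapping.lookup a i) * exp_lin L a"
proof -
  let ?K = "Poly_Mapping.keys a"
  let ?b = "a - Poly_Mapping.single i 1"
  let ?f = "\<lambda>c j. lin_coeff L j ^ Poly_Mapping.lookup c j / fact (Poly_Mapping.lookup c j) :: 'a"
  obtain t where t: "Poly_Mapping.lookup a i = Suc t"
    using i by (metis in_keys_iff not0_implies_Suc)
  have lookup_b: "Poly_Mapping.lookup ?b j = (if j = i then t else Poly_Mapping.lookup a j)" for j
    using t by (simp add: lookup_minus lookup_single)
  have keys_b: "Poly_Mapping.keys ?b \<subseteq> ?K"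
    by (auto simp: in_keys_iff lookup_minus)
  let ?R = "\<Prod>j\<in>?K - {i}. ?f a j"
  have "(\<Prod>j\<in>?K - {i}. ?f ?b j) = ?R"
    by (rule prod.cong) (auto simp: lookup_b simp del: One_nat_def)
  then have exp_b: "exp_lin L ?b = ?f ?b i * ?R"
    by (simp only: exp_lin_eq_prod_superset[OF finite_keys keys_b] prod.remove[OF finite_keys i])
  have exp_a: "exp_lin L a = ?f a i * ?R"
    by (simp only: exp_lin_eq_prod_superset[OF finite_keys order_refl] prod.remove[OF finite_keys i])
  have factor_i: "lin_coeff L i * ?f ?b i = of_nat (Suc t) * ?f a i"
    by (simp add: lookup_b t divide_simps del: of_nat_Suc One_nat_def)
  have "lin_coeff L i * exp_lin L ?b = (lin_coeff L i * ?f ?b i) * ?R"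
    by (simp only: exp_b mult.assoc)
  also have "\<dots> = of_nat (Poly_Mapping.lookup a i) * exp_lin L a"
    by (simp only: factor_i exp_a t mult.assoc)
  finally show ?thesis .
qed

lemma lookup_linear_form_power:
  fixes L :: "'a::field_char_0 mpoly"
  assumes lin: "linear_form L"
  shows "Poly_Mapping.lookup (L ^ m) a = (if mdeg a = m then fact m * exp_lin L a else 0)"
proof (induction m arbitrary: a)
  case 0
  show ?case
    by (auto simp: lookup_one mdeg_eq_0_iff exp_lin_def mfact_def)
next
  case (Suc m)
  have "Poly_Mapping.lookup (L ^ Suc m) a =
      (\<Sum>i\<in>Poly_Mapping.keys a.
        lin_coeff L i * Poly_Mapping.lookup (L ^ m) (a - Poly_Mapping.single i 1))"
    by (simp add: lookup_linear_form_mult[OF lin] del: One_nat_def)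
  also have "\<dots> = (\<Sum>i\<in>Poly_Mapping.keys a.
      if mdeg a = Suc m then fact m * (of_nat (Poly_Mapping.lookup a i) * exp_lin L a) else 0)"
  proof (rule sum.cong[OF refl])
    fix i assume i: "i \<in> Poly_Mapping.keys a"
    then have "mon_le (Poly_Mapping.single i 1) a"
      by (simp add: mon_le_single_iff del: One_nat_def)
    moreover have "1 \<le> mdeg a"
      using lookup_le_mdeg[of a i] i by (simp add: in_keys_iff)
    ultimately show "lin_coeff L i * Poly_Mapping.lookup (L ^ m) (a - Poly_Mapping.single i 1) =
        (if mdeg a = Suc m then fact m * (of_nat (Poly_Mapping.lookup a i) * exp_lin L a) else 0)"
      using exp_lin_minus_single[OF i, of L]
      by (auto simp: Suc.IH mdeg_diff mdeg_single algebra_simps simp del: One_nat_def)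
  qed
  also have "\<dots> = (if mdeg a = Suc m then fact (Suc m) * exp_lin L a else 0)"
  proof -
    have "(\<Sum>i\<in>Poly_Mapping.keys a. of_nat (Poly_Mapping.lookup a i)) = (of_nat (mdeg a) :: 'a)"
      unfolding mdeg_def by simp
    then show ?thesis
      by (simp add: sum_distrib_left[symmetric] sum_distrib_right[symmetric] algebra_simps
          del: One_nat_def)
  qed
  finally show ?case .
qed

lemma ser_mult_poly_ser:
  "ser_mult (poly_ser P) s a =
    (\<Sum>b\<in>Poly_Mapping.keys P. if mon_le b a then Poly_Mapping.lookup P b * s (a - b) else 0)"
proof -
  have "ser_mult (poly_ser P) s a =
      (\<Sum>b\<in>{b. mon_le b a} \<inter> Poly_Mapping.keys P. Poly_Mapping.lookup P b * s (a - b))"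
    unfolding ser_mult_def poly_ser_def
    by (rule sum.mono_neutral_right) (auto simp: finite_mon_le in_keys_iff)
  also have "\<dots> =
      (\<Sum>b\<in>Poly_Mapping.keys P. if mon_le b a then Poly_Mapping.lookup P b * s (a - b) else 0)"
    by (subst Int_commute) (simp add: sum.inter_restrict)
  finally show ?thesis .
qed

lemma ser_mult_cmult_left: "ser_mult (\<lambda>b. c * s b) t a = c * ser_mult s t a"
  unfolding ser_mult_def by (simp add: sum_distrib_left mult.assoc)

lemma ser_mult_sum_left: "ser_mult (\<lambda>b. \<Sum>j\<in>J. s j b) t a = (\<Sum>j\<in>J. ser_mult (s j) t a)"
  unfolding ser_mult_def by (simp add: sum_distrib_right) (rule sum.swap)

lemma ser_mult_exp_lin:
  fixes P L :: "'a::field_char_0 mpoly"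
  assumes "linear_form L" "homog j P" "mdeg a = j + m"
  shows "fact m * ser_mult (poly_ser P) (exp_lin L) a = Poly_Mapping.lookup (P * L ^ m) a"
  unfolding ser_mult_poly_ser lookup_mult_eq_sum_keys sum_distrib_left
proof (rule sum.cong[OF refl])
  fix b assume "b \<in> Poly_Mapping.keys P"
  then have "mdeg b = j"
    using assms(2) unfolding homog_def by blast
  then show "fact m * (if mon_le b a then Poly_Mapping.lookup P b * exp_lin L (a - b) else 0) =
      (if mon_le b a then Poly_Mapping.lookup P b * Poly_Mapping.lookup (L ^ m) (a - b) else 0)"
    using assms(3) by (auto simp: lookup_linear_form_power[OF assms(1)] mdeg_diff)
qed

text \<open>The polynomial \<open>\<omega>\<^sup>d\<^sup>,\<^sup>\<ell>\<^sup>,\<^sup>x\<close> of the paper, given the components \<open>w j\<close> of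
  \<open>\<omega> = (\<Sum>j\<le>k. w j * \<ell>\<^sup>k\<^sup>-\<^sup>j)\<close>.\<close>

definition omega_dlx :: "nat \<Rightarrow> nat \<Rightarrow> (nat \<Rightarrow> 'a::field_char_0 mpoly) \<Rightarrow> 'a mpoly" where
  "omega_dlx d k w = Const (1 / of_nat (fact d)) * (\<Sum>j=0..k. Const (of_nat (fact (d - j))) * w j)"

lemma ser_mult_omega_dlx_exp_lin:
  fixes L :: "'a::field_char_0 mpoly"
  assumes L: "linear_form L" and "k \<le> d" and w: "\<And>j. j \<le> k \<Longrightarrow> homog j (w j)"
    and a: "mdeg a = d"
  shows "ser_mult (poly_ser (omega_dlx d k w)) (exp_lin L) a =
    Poly_Mapping.lookup ((\<Sum>j=0..k. w j * L ^ (k - j)) * L ^ (d - k)) a / fact d"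
proof -
  have "poly_ser (omega_dlx d k w) =
      (\<lambda>b. 1 / fact d * (\<Sum>j=0..k. fact (d - j) * poly_ser (w j) b))"
    by (simp add: fun_eq_iff omega_dlx_def poly_ser_def lookup_Const_mult lookup_sum)
  then have "ser_mult (poly_ser (omega_dlx d k w)) (exp_lin L) a =
      1 / fact d * (\<Sum>j=0..k. fact (d - j) * ser_mult (poly_ser (w j)) (exp_lin L) a)"
    by (simp only: ser_mult_cmult_left ser_mult_sum_left)
  also have "\<dots> = 1 / fact d * (\<Sum>j=0..k. Poly_Mapping.lookup (w j * L ^ (d - j)) a)"
  proof -
    have "fact (d - j) * ser_mult (poly_ser (w j)) (exp_lin L) a =
        Poly_Mapping.lookup (w j * L ^ (d - j)) a"
      if "j \<in> {0..k}" for j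
      using that \<open>k \<le> d\<close> a by (intro ser_mult_exp_lin[OF L w]) auto
    then show ?thesis
      by simp
  qed
  also have "\<dots> = Poly_Mapping.lookup (\<Sum>j=0..k. w j * L ^ (d - j)) a / fact d"
    by (simp add: lookup_sum)
  also have "(\<Sum>j=0..k. w j * L ^ (d - j)) = (\<Sum>j=0..k. w j * L ^ (k - j)) * L ^ (d - k)"
    unfolding sum_distrib_right using \<open>k \<le> d\<close>
    by (intro sum.cong refl) (simp add: mult.assoc power_add[symmetric])
  finally show ?thesis .
qed

lemma apply_dual_eq_sum_superset:
  "finite K \<Longrightarrow> Poly_Mapping.keys p \<subseteq> K \<Longrightarrow>
    apply_dual s p = (\<Sum>a\<in>K. Poly_Mapping.lookup p a * dual_val s a)"
  unfolding apply_dual_def by (rule sum.mono_neutral_left) (auto simp: in_keys_iff)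

lemma apply_dual_zero [simp]: "apply_dual s 0 = 0"
  by (simp add: apply_dual_def)

lemma apply_dual_add: "apply_dual s (p + q) = apply_dual s p + apply_dual s q"
proof -
  let ?K = "Poly_Mapping.keys p \<union> Poly_Mapping.keys q"
  have "apply_dual s (p + q) = (\<Sum>a\<in>?K. Poly_Mapping.lookup (p + q) a * dual_val s a)"
    using keys_add[of p q] by (intro apply_dual_eq_sum_superset) auto
  also have "\<dots> = apply_dual s p + apply_dual s q"
    by (simp add: lookup_add distrib_right sum.distrib
        apply_dual_eq_sum_superset[of ?K p] apply_dual_eq_sum_superset[of ?K q])
  finally show ?thesis .
qed

definition homog_comp :: "nat \<Rightarrow> 'a::zero mpoly \<Rightarrow> 'a mpoly" where
  "homog_comp e p = Abs_poly_mapping (\<lambda>a. if mdeg a = e then Poly_Mapping.lookup p a else 0)"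

definition ser_homog_part :: "nat \<Rightarrow> 'a::zero series \<Rightarrow> 'a series" where
  "ser_homog_part e s a = (if mdeg a = e then s a else 0)"

lemma lookup_homog_comp:
  "Poly_Mapping.lookup (homog_comp e p) a = (if mdeg a = e then Poly_Mapping.lookup p a else 0)"
proof -
  have "finite {a. (if mdeg a = e then Poly_Mapping.lookup p a else 0) \<noteq> 0}"
    by (rule finite_subset[OF _ finite_keys[of p]]) (simp add: subset_iff in_keys_iff)
  then show ?thesis
    unfolding homog_comp_def by simp
qed

lemma keys_homog_comp: "Poly_Mapping.keys (homog_comp e p) \<subseteq> Poly_Mapping.keys p"
  by (simp add: subset_iff in_keys_iff lookup_homog_comp)

lemma inS_homog_comp: "inS n p \<Longrightarrow> inS n (homog_comp e p)"
  using keys_homog_comp unfolding inS_def poly_in_vars_def by blast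

lemma apply_dual_ser_homog_part:
  "apply_dual (ser_homog_part e s) p = apply_dual s (homog_comp e p)"
proof -
  have "apply_dual s (homog_comp e p) =
      (\<Sum>a\<in>Poly_Mapping.keys p. Poly_Mapping.lookup (homog_comp e p) a * dual_val s a)"
    by (rule apply_dual_eq_sum_superset[OF finite_keys keys_homog_comp])
  also have "\<dots> = apply_dual (ser_homog_part e s) p"
    unfolding apply_dual_def
    by (rule sum.cong) (simp_all add: lookup_homog_comp dual_val_def ser_homog_part_def)
  finally show ?thesis ..
qed

lemma homog_comp_mult_homog:
  fixes g q :: "'a::comm_semiring_1 mpoly"
  assumes "homog e g"
  shows "homog_comp d (q * g) = (if e \<le> d then g * homog_comp (d - e) q else 0)"
proof (rule poly_mapping_eqI)
  fix a
  have deg: "mdeg (a - l) = mdeg a - e \<and> e \<le> mdeg a"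
    if "l \<in> Poly_Mapping.keys g" "mon_le l a" for l
    using assms that mdeg_diff[of l a] mdeg_mono[of l a] unfolding homog_def by auto
  show "Poly_Mapping.lookup (homog_comp d (q * g)) a =
      Poly_Mapping.lookup (if e \<le> d then g * homog_comp (d - e) q else 0) a"
  proof (cases "e \<le> d")
    case True
    have "mdeg (a - l) = d - e \<longleftrightarrow> mdeg a = d"
      if "l \<in> Poly_Mapping.keys g" "mon_le l a" for l
      using deg[OF that] True by auto
    then have "Poly_Mapping.lookup (homog_comp d (g * q)) a =
        Poly_Mapping.lookup (g * homog_comp (d - e) q) a"
      unfolding lookup_homog_comp lookup_mult_eq_sum_keys[of g]
      by (auto intro!: sum.cong sum.neutral)
    with True show ?thesis
      by (simp add: mult.commute)
  next
    case False
    have "Poly_Mapping.lookup (g * q) a = 0" if "mdeg a = d"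
      unfolding lookup_mult_eq_sum_keys[of g]
      using deg False that by (intro sum.neutral) auto
    with False show ?thesis
      by (simp add: lookup_homog_comp mult.commute)
  qed
qed

lemma apply_dual_ser_homog_part_I_phi:
  fixes s :: "'a::comm_ring_1 series"
  assumes "p \<in> I_phi n s"
  shows "apply_dual (ser_homog_part d s) p = 0"
  using assms unfolding I_phi_def
proof (induction rule: ideal_gen.induct)
  case zero
  show ?case by simp
next
  case (gen g q)
  then obtain e where g: "homog e g" "star_zero n g s" and q: "inS n q"
    by blast
  have "apply_dual s (g * homog_comp (d - e) q) = 0"
    using g(2) inS_homog_comp[OF q] unfolding star_zero_def by blast
  then show ?case
    by (simp add: apply_dual_ser_homog_part homog_comp_mult_homog[OF g(1)])
next
  case (add a b)
  then show ?case by (simp add: apply_dual_add)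
qed

theorem lemma5p1:
  fixes n d s :: nat
    and f :: "'a::field_char_0 mpoly"
    and k :: "nat \<Rightarrow> nat"
    and \<omega> L :: "nat \<Rightarrow> 'a mpoly"
    and \<xi> :: "nat \<Rightarrow> nat \<Rightarrow> 'a"
    and \<omega>j :: "nat \<Rightarrow> nat \<Rightarrow> 'a mpoly"
  assumes f_deg: "inSd n d f"
    and GAD: "f = (\<Sum>i=1..s. \<omega> i * L i ^ (d - k i))"
    and k_le: "\<And>i. i \<in> {1..s} \<Longrightarrow> k i \<le> d"
    and \<omega>_deg: "\<And>i. i \<in> {1..s} \<Longrightarrow> inSd n (k i) (\<omega> i)"
    and L_def: "\<And>i. i \<in> {1..s} \<Longrightarrow>
                 L i = Var 0 + (\<Sum>j=1..n. Const (\<xi> i j) * Var j)"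
    and non_prop: "\<And>i j c. i \<in> {1..s} \<Longrightarrow> j \<in> {1..s} \<Longrightarrow> i \<noteq> j \<Longrightarrow> L i \<noteq> Const c * L j"
    and not_dvd: "\<And>i. i \<in> {1..s} \<Longrightarrow> \<not> (\<exists>q. inS n q \<and> \<omega> i = L i * q)"
    and \<omega>j_deg: "\<And>i j. i \<in> {1..s} \<Longrightarrow> j \<le> k i \<Longrightarrow>
                 poly_in_vars {1..n} (\<omega>j i j) \<and> homog j (\<omega>j i j)"
    and \<omega>j_dec: "\<And>i. i \<in> {1..s} \<Longrightarrow> \<omega> i = (\<Sum>j=0..k i. \<omega>j i j * L i ^ (k i - j))"
  shows "\<forall>p \<in> I_phi n
            (\<lambda>\<alpha>. \<Sum>i=1..s. ser_mult
                 (poly_ser (Const (1 / of_nat (fact d)) *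
                            (\<Sum>j=0..k i. Const (of_nat (fact (d - j))) * \<omega>j i j)))
                 (exp_lin (L i)) \<alpha>).
           homog d p \<longrightarrow> apply_dual (fstar d f) p = 0"
proof -
  define \<phi> where
    "\<phi> = (\<lambda>\<alpha>. \<Sum>i=1..s. ser_mult (poly_ser (omega_dlx d (k i) (\<omega>j i))) (exp_lin (L i)) \<alpha>)"
  have L_linear: "linear_form (L i)" if "i \<in> {1..s}" for i
    unfolding L_def[OF that]
    by (intro linear_form_add linear_form_sum linear_form_Const_mult linear_form_Var)
  have "fstar d f = ser_homog_part d \<phi>"
  proof
    fix a
    show "fstar d f a = ser_homog_part d \<phi> a"
    proof (cases "mdeg a = d")
      case True
      then have "\<phi> a = (\<Sum>i=1..s. Poly_Mapping.lookup (\<omega> i * L i ^ (d - k i)) a / fact d)"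
        unfolding \<phi>_def using L_linear k_le \<omega>j_deg \<omega>j_dec
        by (intro sum.cong refl) (simp add: ser_mult_omega_dlx_exp_lin)
      also have "\<dots> = Poly_Mapping.lookup f a / fact d"
        by (simp add: GAD lookup_sum sum_divide_distrib)
      finally show ?thesis
        using True by (simp add: fstar_def ser_homog_part_def)
    next
      case False
      then have "Poly_Mapping.lookup f a = 0"
        using f_deg by (auto simp: inSd_def homog_def in_keys_iff)
      with False show ?thesis
        by (simp add: fstar_def ser_homog_part_def)
    qed
  qed
  then have "\<forall>p\<in>I_phi n \<phi>. apply_dual (fstar d f) p = 0"
    by (simp add: apply_dual_ser_homog_part_I_phi)
  then show ?thesis
    unfolding \<phi>_def omega_dlx_def by blast
qed

end
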